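(* Let $\alpha,\beta,\gamma\in\{1,-1\}$, $u_1,\dots,u_4\in\Bbbk^\times$, and let $D(\mathfrak{D}_4)$ act on $B$ as in the context. Then the group-grade component of the homological determinant $\mathrm{hdet}_B:D(\mathfrak{D}_4)\to\Bbbk$ is trivial (i.e. $\mathrm{hdet}_B(\phi_g)=\delta_{g,e}$), and $$\mathrm{hdet}_B(r)=-\alpha\beta\gamma,\qquad \mathrm{hdet}_B(s)=-\beta\gamma.$$ In particular the homological determinant is trivial (equal to the counit) if and only if $\alpha=1$ and $\beta=-\gamma$.
   Context: Let $\Bbbk=\mathbb{C}$, $i=\sqrt{-1}$, $\mathfrak{D}_4=\langle r,s\mid r^4=e,\ s^2=r^2,\ rsrs^{-1}=e\rangle$. The Drinfeld double $D(G)$ has basis $\{\phi_gh\}$, multiplication $(\phi_g h)(\phi_{g'}h')=\delta_{g,hg'h^{-1}}\phi_g hh'$, comultiplication $\Delta(\phi_gh)=\sum_x\phi_xh\otimes\phi_{x^{-1}g}h$, counit $\epsilon(\phi_gh)=\delta_{g,e}$. A right $D(G)$-module algebra is a $G$-graded algebra with a right $G$-action by algebra automorphisms with $A_x\cdot g\subseteq A_{g^{-1}xg}$, $\phi_x$ projecting onto $A_x$. The homological determinant $\mathrm{hdet}_B$ of a Hopf action on an AS regular algebra is that of Kirkman–Kuzmanovich–Zhang; for a Koszul AS regular algebra $B$ it is the character by which $D(G)$ acts on the one-dimensional span of the twisted superpotential of $B$. The algebra $B$ is $\Bbbk\langle x_1,x_2,y_1,y_2,z_1,z_2\rangle$ modulo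 $x_1x_2-\alpha x_2x_1$, $y_1y_2-\beta y_2y_1$, $z_1z_2-\gamma z_2z_1$, $x_1y_1-u_1y_1x_2$, $x_2y_1-u_1y_1x_1$, $x_1y_2+u_1y_2x_2$, $x_2y_2+u_1y_2x_1$, $x_1z_1-iu_2z_1x_2$, $x_2z_1-iu_2z_1x_1$, $ix_1z_2-u_2z_2x_2$, $ix_2z_2-u_2z_2x_1$, $y_1z_2-u_3z_2y_1$, $y_2z_1-u_3z_1y_2$, $y_1z_1-u_4z_1y_1$, $y_2z_2-u_4z_2y_2$; it is Koszul AS regular of dimension 6. The $D(\mathfrak{D}_4)$-module algebra structure is given on generators by: $x_1$: grade $s$, $x_1\cdot r=x_2$, $x_1\cdot s=-ix_1$; $x_2$: grade $sr^2$, $x_2\cdot r=-x_1$, $x_2\cdot s=ix_2$; $y_1$: grade $sr$, $y_1\cdot r=-y_2$, $y_1\cdot s=y_2$; $y_2$: grade $sr^3$, $y_2\cdot r=-y_1$, $y_2\cdot s=y_1$; $z_1$: grade $sr$, $z_1\cdot r=-iz_2$, $z_1\cdot s=z_2$; $z_2$: grade $sr^3$, $z_2\cdot r=-iz_1$, $z_2\cdot s=-z_1$. *)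

theory Defs
  imports Complex_Main
begin

text \<open>An element (a,b) with a in {0..3}, b in {0,1} stands for r^a s^b.
  From s r s^-1 = r^-1 we get s r^c = r^-c s, and s^2 = r^2.\<close>

type_synonym grp = "int \<times> int"

definition G :: "grp set" where
  "G = {0..3} \<times> {0..1}"

definition gmul :: "grp \<Rightarrow> grp \<Rightarrow> grp" where
  "gmul x y = (case x of (a, b) \<Rightarrow> case y of (c, d) \<Rightarrow>
     ((a + (if b = 1 then - c else c) + (if b = 1 \<and> d = 1 then 2 else 0)) mod 4,
      (b + d) mod 2))"

definition ge :: grp where "ge = (0, 0)"
definition gr :: grp where "gr = (1, 0)"
definition gs :: grp where "gs = (0, 1)"

section \<open>Generators of B: x1=0, x2=1, y1=2, y2=3, z1=4, z2=5\<close>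

definition gen_grade :: "nat \<Rightarrow> grp" where
  "gen_grade j = (if j = 0 then gs                 \<comment> \<open>x1 : s\<close>
             else if j = 1 then gmul gs (gmul gr gr) \<comment> \<open>x2 : s r^2\<close>
             else if j = 2 then gmul gs gr            \<comment> \<open>y1 : s r\<close>
             else if j = 3 then gmul gs (gmul gr (gmul gr gr)) \<comment> \<open>y2 : s r^3\<close>
             else if j = 4 then gmul gs gr            \<comment> \<open>z1 : s r\<close>
             else gmul gs (gmul gr (gmul gr gr)))"    \<comment> \<open>z2 : s r^3\<close>

text \<open>Right action matrices: v_j . g = sum_k M j k v_k.\<close>

definition Mr :: "nat \<Rightarrow> nat \<Rightarrow> complex" where
  "Mr j k = (if (j, k) = (0, 1) then 1
        else if (j, k) = (1, 0) then -1
        else if (j, k) = (2, 3) then -1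
        else if (j, k) = (3, 2) then -1
        else if (j, k) = (4, 5) then - \<i>
        else if (j, k) = (5, 4) then - \<i>
        else 0)"

definition Ms :: "nat \<Rightarrow> nat \<Rightarrow> complex" where
  "Ms j k = (if (j, k) = (0, 0) then - \<i>
        else if (j, k) = (1, 1) then \<i>
        else if (j, k) = (2, 3) then 1
        else if (j, k) = (3, 2) then 1
        else if (j, k) = (4, 5) then 1
        else if (j, k) = (5, 4) then -1
        else 0)"

definition matmul :: "(nat \<Rightarrow> nat \<Rightarrow> complex) \<Rightarrow> (nat \<Rightarrow> nat \<Rightarrow> complex) \<Rightarrow> nat \<Rightarrow> nat \<Rightarrow> complex" where
  "matmul A B j k = (\<Sum>l<6. A j l * B l k)"

definition matid :: "nat \<Rightarrow> nat \<Rightarrow> complex" where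
  "matid j k = (if j = k then 1 else 0)"

primrec matpow :: "(nat \<Rightarrow> nat \<Rightarrow> complex) \<Rightarrow> nat \<Rightarrow> nat \<Rightarrow> nat \<Rightarrow> complex" where
  "matpow A 0 = matid"
| "matpow A (Suc n) = matmul (matpow A n) A"

text \<open>Matrix of the right action of r^a s^b on V = span of the generators
  (right action: v.(r^a s^b) = (v.r^a).s^b).\<close>
definition gmat :: "grp \<Rightarrow> nat \<Rightarrow> nat \<Rightarrow> complex" where
  "gmat g = matmul (matpow Mr (nat (fst g))) (matpow Ms (nat (snd g)))"

section \<open>Tensor powers of V, as coefficient functions on index words\<close>

definition idx :: "nat \<Rightarrow> nat list set" where
  "idx n = {ks. length ks = n \<and> set ks \<subseteq> {..<6}}"

definition word_grade :: "nat list \<Rightarrow> grp" where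
  "word_grade ks = foldl (\<lambda>g j. gmul g (gen_grade j)) ge ks"

text \<open>Projection phi_g onto the G-degree g part of V^{\<otimes>6}.\<close>
definition proj :: "grp \<Rightarrow> (nat list \<Rightarrow> complex) \<Rightarrow> nat list \<Rightarrow> complex" where
  "proj g w ks = (if word_grade ks = g then w ks else 0)"

definition gact :: "grp \<Rightarrow> (nat list \<Rightarrow> complex) \<Rightarrow> nat list \<Rightarrow> complex" where
  "gact h w ls = (if ls \<in> idx 6 then
      (\<Sum>ks\<in>idx 6. w ks * (\<Prod>t<6. gmat h (ks ! t) (ls ! t))) else 0)"

text \<open>Elements of D(G): coefficient functions x g h on the basis phi_g h.
  The action of phi_g h is w |-> (w . phi_g) . h.\<close>
definition dact :: "(grp \<Rightarrow> grp \<Rightarrow> complex) \<Rightarrow> (nat list \<Rightarrow> complex) \<Rightarrow> nat list \<Rightarrow> complex" where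
  "dact x w ks = (\<Sum>g\<in>G. \<Sum>h\<in>G. x g h * gact h (proj g w) ks)"

definition dphi :: "grp \<Rightarrow> grp \<Rightarrow> grp \<Rightarrow> complex" where
  "dphi g = (\<lambda>g' h'. if g' = g \<and> h' = ge then 1 else 0)"

definition dgrp :: "grp \<Rightarrow> grp \<Rightarrow> grp \<Rightarrow> complex" where
  "dgrp h = (\<lambda>g' h'. if h' = h then 1 else 0)"

definition dcounit :: "(grp \<Rightarrow> grp \<Rightarrow> complex) \<Rightarrow> complex" where
  "dcounit x = (\<Sum>h\<in>G. x ge h)"

definition mono2 :: "nat \<Rightarrow> nat \<Rightarrow> nat list \<Rightarrow> complex" where
  "mono2 a b ks = (if ks = [a, b] then 1 else 0)"

definition bin :: "complex \<Rightarrow> nat \<Rightarrow> nat \<Rightarrow> complex \<Rightarrow> nat \<Rightarrow> nat \<Rightarrow> nat list \<Rightarrow> complex" where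
  "bin c a b d e f ks = c * mono2 a b ks + d * mono2 e f ks"

definition rels :: "complex \<Rightarrow> complex \<Rightarrow> complex \<Rightarrow> complex \<Rightarrow> complex \<Rightarrow> complex \<Rightarrow> complex
    \<Rightarrow> (nat list \<Rightarrow> complex) list" where
  "rels \<alpha> \<beta> \<gamma> u1 u2 u3 u4 =
    [bin 1 0 1 (- \<alpha>) 1 0,
     bin 1 2 3 (- \<beta>) 3 2,
     bin 1 4 5 (- \<gamma>) 5 4,
     bin 1 0 2 (- u1) 2 1,
     bin 1 1 2 (- u1) 2 0,
     bin 1 0 3 u1 3 1,
     bin 1 1 3 u1 3 0,
     bin 1 0 4 (- \<i> * u2) 4 1,
     bin 1 1 4 (- \<i> * u2) 4 0,
     bin \<i> 0 5 (- u2) 5 1,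
     bin \<i> 1 5 (- u2) 5 0,
     bin 1 2 5 (- u3) 5 2,
     bin 1 3 4 (- u3) 4 3,
     bin 1 2 4 (- u4) 4 2,
     bin 1 3 5 (- u4) 5 3]"

definition in_R :: "(nat list \<Rightarrow> complex) list \<Rightarrow> (nat list \<Rightarrow> complex) \<Rightarrow> bool" where
  "in_R rs f = (\<exists>c :: nat \<Rightarrow> complex. \<forall>ks\<in>idx 2.
      f ks = (\<Sum>j<length rs. c j * (rs ! j) ks))"

text \<open>W = \<Inter>_{i=0..4} V^{\<otimes>i} \<otimes> R \<otimes> V^{\<otimes>(4-i)} \<subseteq> V^{\<otimes>6}, the span of the
  twisted superpotential of the Koszul AS regular algebra of dimension 6.\<close>
definition Wsp :: "(nat list \<Rightarrow> complex) list \<Rightarrow> (nat list \<Rightarrow> complex) set" where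
  "Wsp rs = {w. (\<forall>ks. ks \<notin> idx 6 \<longrightarrow> w ks = 0) \<and>
      (\<forall>i\<le>4. \<forall>p\<in>idx i. \<forall>q\<in>idx (4 - i). in_R rs (\<lambda>m. w (p @ m @ q)))}"

definition hdet :: "(nat list \<Rightarrow> complex) list \<Rightarrow> (grp \<Rightarrow> grp \<Rightarrow> complex) \<Rightarrow> complex" where
  "hdet rs x = (THE c. \<forall>w\<in>Wsp rs. dact x w = (\<lambda>ks. c * w ks))"

end

theory Submission
  imports Defs
begin

text \<open>
  Each defining relation of B ties a word of two distinct generators to a multiple of the word with
  the two letters in the opposite order, except that passing a y- or z-letter exchanges x_1 and x_2.
  Renaming the x-letters according to the parity of the y- and z-letters to their left ("untwisting")
  turns the relations into skew-commutations. Hence bubble sort shows that a superpotential is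
  determined by its coefficient at x_1 x_2 y_1 y_2 z_1 z_2, so the space W is at most one-dimensional;
  weighting each word without repeated letters by the product of the skew-commutation factors over the
  inversions of its untwisted word gives a nonzero element of W (here \<alpha> * \<alpha> = 1 is needed).
  The group acts on the sixth tensor power by monomial matrices preserving the relations, and the
  relations are homogeneous for the D4-grading, so every element of D(D4) acts on W by a scalar, which
  is read off at the sorted word: r gives -\<alpha>\<beta>\<gamma>, s gives -\<beta>\<gamma>, and the sorted word has degree e.
\<close>

lemma less_six_cases: "(a::nat) < 6 \<Longrightarrow> a = 0 \<or> a = 1 \<or> a = 2 \<or> a = 3 \<or> a = 4 \<or> a = 5"
  by arith

lemma idx_2_cases: "ks \<in> idx 2 \<Longrightarrow> \<exists>a b. ks = [a, b] \<and> a < 6 \<and> b < 6"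
  by (auto simp: idx_def numeral_2_eq_2 length_Suc_conv)

lemma mem_Wsp_iff: "w \<in> Wsp rs \<longleftrightarrow> (\<forall>ks. ks \<notin> idx 6 \<longrightarrow> w ks = 0) \<and>
   (\<forall>p q. length p + length q = 4 \<longrightarrow> set p \<subseteq> {..<6} \<longrightarrow> set q \<subseteq> {..<6} \<longrightarrow>
      in_R rs (\<lambda>m. w (p @ m @ q)))"
  unfolding Wsp_def idx_def
  by (auto, metis add_diff_cancel_left' le_add1)

section \<open>Untwisting words\<close>

fun untwist :: "bool \<Rightarrow> nat list \<Rightarrow> nat list" where
  "untwist b [] = []"
| "untwist b (a # l) =
    (if a < 2 then (if b then 1 - a else a) # untwist b l else a # untwist (\<not> b) l)"

fun parity :: "bool \<Rightarrow> nat list \<Rightarrow> bool" where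
  "parity b [] = b"
| "parity b (a # l) = parity (if a < 2 then b else \<not> b) l"

lemma untwist_append: "untwist b (p @ q) = untwist b p @ untwist (parity b p) q"
  by (induction p arbitrary: b) auto

lemma length_untwist [simp]: "length (untwist b l) = length l"
  by (induction l arbitrary: b) auto

lemma set_untwist_subset: "set l \<subseteq> {..<6} \<Longrightarrow> set (untwist b l) \<subseteq> {..<6}"
  by (induction l arbitrary: b) auto

lemma untwist_inj: "untwist b l1 = untwist b l2 \<Longrightarrow> l1 = l2"
proof (induction l1 arbitrary: b l2)
  case Nil
  then show ?case by (cases l2) (auto split: if_splits)
next
  case (Cons a l1)
  then show ?case by (cases l2) (auto split: if_splits)
qed

definition base6 :: "nat list \<Rightarrow> nat" where
  "base6 l = foldl (\<lambda>acc x. 6 * acc + x) 0 l"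

lemma foldl_base6_shift:
  "foldl (\<lambda>acc x. 6 * acc + x) (c::nat) l = c * 6 ^ length l + foldl (\<lambda>acc x. 6 * acc + x) 0 l"
proof (induction l arbitrary: c)
  case (Cons x l)
  show ?case
    using Cons.IH[of "6 * c + x"] Cons.IH[of x] by (simp add: algebra_simps)
qed simp

lemma base6_append: "base6 (p @ q) = base6 p * 6 ^ length q + base6 q"
  unfolding base6_def by (simp add: foldl_base6_shift[of "foldl _ 0 p"])

lemma base6_swap_less:
  assumes "y < x"
  shows "base6 (p @ [y, x] @ q) < base6 (p @ [x, y] @ q)"
proof -
  have split: "base6 (p @ [a, b] @ q) = (base6 p * 36 + (6 * a + b)) * 6 ^ length q + base6 q" for a b
    using base6_append[of "p @ [a, b]" q] base6_append[of p "[a, b]"] by (simp add: base6_def)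
  have "6 * y + x < 6 * x + y" using assms by simp
  then show ?thesis unfolding split by simp
qed

lemma strictly_increasing_digits:
  fixes n :: "nat list"
  assumes "length n = 6" "set n \<subseteq> {..<6}" "\<forall>t<5. n ! t < n ! Suc t"
  shows "n = [0, 1, 2, 3, 4, 5]"
proof -
  have sorted: "sorted_wrt (<) n"
    using assms(1,3) by (simp add: sorted_wrt_iff_nth_Suc_transp transp_on_less)
  then have "card (set n) = 6"
    using assms(1) by (simp add: distinct_card strict_sorted_iff)
  then have "set n = {..<6}"
    using assms(2) by (simp add: card_subset_eq)
  then show ?thesis
    using sorted by (intro strict_sorted_equal) (auto simp: lessThan_nat_numeral)
qed

text \<open>For letters a \<noteq> b, the word tied to a b by a defining relation of B.\<close>

definition rel_partner :: "nat \<Rightarrow> nat \<Rightarrow> nat list" where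
  "rel_partner a b = (if a < 2 \<and> b < 2 then [b, a] else if a < 2 then [b, 1 - a]
     else if b < 2 then [1 - b, a] else [b, a])"

lemma rel_partner_props:
  assumes "a < 6" "b < 6" "a \<noteq> b"
  shows "set (rel_partner a b) \<subseteq> {..<6}" "length (rel_partner a b) = 2"
    "untwist P (rel_partner a b) = rev (untwist P [a, b])"
    "parity P (rel_partner a b) = parity P [a, b]"
proof -
  have "set (rel_partner a b) \<subseteq> {..<6} \<and> length (rel_partner a b) = 2 \<and>
      untwist P (rel_partner a b) = rev (untwist P [a, b]) \<and>
      parity P (rel_partner a b) = parity P [a, b]"
    using less_six_cases[OF assms(1)] less_six_cases[OF assms(2)] assms(3)
    by (cases P; elim disjE; simp add: rel_partner_def)
  then show "set (rel_partner a b) \<subseteq> {..<6}" "length (rel_partner a b) = 2"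
    "untwist P (rel_partner a b) = rev (untwist P [a, b])"
    "parity P (rel_partner a b) = parity P [a, b]"
    by auto
qed

lemma distinct_untwist_pair: "a \<noteq> b \<Longrightarrow> distinct (untwist P [a, b])"
  by auto

section \<open>Monomial actions on the sixth tensor power\<close>

definition monomial :: "(nat \<Rightarrow> nat \<Rightarrow> complex) \<Rightarrow> (nat \<Rightarrow> nat) \<Rightarrow> (nat \<Rightarrow> complex) \<Rightarrow> bool" where
  "monomial M \<rho> e \<longleftrightarrow>
    (\<forall>j<6. \<forall>k<6. M j k = (if j = \<rho> k then e k else 0)) \<and> (\<forall>k<6. \<rho> k < 6)"

definition tensor_act :: "(nat \<Rightarrow> nat \<Rightarrow> complex) \<Rightarrow> (nat list \<Rightarrow> complex) \<Rightarrow> nat list \<Rightarrow> complex" where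
  "tensor_act M w ls = (if ls \<in> idx 6 then
      (\<Sum>ks\<in>idx 6. w ks * (\<Prod>t<6. M (ks ! t) (ls ! t))) else 0)"

lemma gact_eq_tensor_act: "gact h w = tensor_act (gmat h) w"
  unfolding gact_def tensor_act_def ..

lemma finite_idx: "finite (idx n)"
proof -
  have "idx n = {xs. set xs \<subseteq> {..<6} \<and> length xs = n}" by (auto simp: idx_def)
  then show ?thesis using finite_lists_length_eq[of "{..<6::nat}" n] by simp
qed

lemma prod_list_map_mult:
  fixes f g :: "'a \<Rightarrow> 'b::comm_monoid_mult"
  shows "prod_list (map (\<lambda>k. f k * g k) l) = prod_list (map f l) * prod_list (map g l)"
  by (induction l) (auto simp: ac_simps)

lemma prod_monomial_entries:
  assumes mono: "monomial M \<rho> e" and ks: "ks \<in> idx 6" and ls: "ls \<in> idx 6"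
  shows "(\<Prod>t<6. M (ks ! t) (ls ! t)) = (if ks = map \<rho> ls then prod_list (map e ls) else 0)"
proof -
  have "(\<Prod>t<6. M (ks ! t) (ls ! t)) = (\<Prod>t<6. if ks ! t = \<rho> (ls ! t) then e (ls ! t) else 0)"
  proof (rule prod.cong)
    fix t assume "t \<in> {..<6::nat}"
    then have "ks ! t \<in> set ks" "ls ! t \<in> set ls"
      using ks ls by (auto simp: idx_def intro!: nth_mem)
    then have "ks ! t < 6" "ls ! t < 6"
      using ks ls by (auto simp: idx_def)
    then show "M (ks ! t) (ls ! t) = (if ks ! t = \<rho> (ls ! t) then e (ls ! t) else 0)"
      using mono by (simp add: monomial_def)
  qed simp
  also have "\<dots> = (if ks = map \<rho> ls then prod_list (map e ls) else 0)"
  proof (cases "ks = map \<rho> ls")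
    case True
    then show ?thesis using ls by (simp add: idx_def prod.list_conv_set_nth atLeast0LessThan)
  next
    case False
    have "length ks = 6" "length ls = 6" using ks ls by (simp_all add: idx_def)
    with False obtain t where "t < 6" "ks ! t \<noteq> \<rho> (ls ! t)"
      by (metis length_map list_eq_iff_nth_eq nth_map)
    then show ?thesis using False by (intro trans[OF prod_zero]) auto
  qed
  finally show ?thesis .
qed

lemma tensor_act_monomial:
  assumes mono: "monomial M \<rho> e"
  shows "tensor_act M w = (\<lambda>ls. if ls \<in> idx 6 then w (map \<rho> ls) * prod_list (map e ls) else 0)"
proof
  fix ls
  show "tensor_act M w ls = (if ls \<in> idx 6 then w (map \<rho> ls) * prod_list (map e ls) else 0)"
  proof (cases "ls \<in> idx 6")
    case False
    then show ?thesis by (simp add: tensor_act_def)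
  next
    case True
    have image: "map \<rho> ls \<in> idx 6" using True mono by (auto simp: idx_def monomial_def)
    have "tensor_act M w ls = (\<Sum>ks\<in>idx 6. w ks * (\<Prod>t<6. M (ks ! t) (ls ! t)))"
      using True by (simp add: tensor_act_def)
    also have "\<dots> = (\<Sum>ks\<in>idx 6. if ks = map \<rho> ls then w ks * prod_list (map e ls) else 0)"
      using True by (intro sum.cong) (auto simp: prod_monomial_entries[OF mono])
    also have "\<dots> = w (map \<rho> ls) * prod_list (map e ls)"
      using image finite_idx by (simp add: sum.delta)
    finally show ?thesis using True by simp
  qed
qed

lemma monomial_matmul:
  assumes A: "monomial A \<rho>A eA" and B: "monomial B \<rho>B eB"
  shows "monomial (matmul A B) (\<rho>A \<circ> \<rho>B) (\<lambda>k. eA (\<rho>B k) * eB k)"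
  unfolding monomial_def
proof (intro conjI allI impI)
  fix j k :: nat assume j: "j < 6" and k: "k < 6"
  have kk: "\<rho>B k < 6" using B k by (simp add: monomial_def)
  have "matmul A B j k = (\<Sum>l<6. if l = \<rho>B k then A j l * eB k else 0)"
    unfolding matmul_def using B k by (intro sum.cong) (auto simp: monomial_def)
  also have "\<dots> = A j (\<rho>B k) * eB k" using kk by (simp add: sum.delta)
  also have "\<dots> = (if j = (\<rho>A \<circ> \<rho>B) k then eA (\<rho>B k) * eB k else 0)"
    using A j kk by (simp add: monomial_def)
  finally show "matmul A B j k = (if j = (\<rho>A \<circ> \<rho>B) k then eA (\<rho>B k) * eB k else 0)" .
next
  fix k :: nat assume "k < 6"
  then show "(\<rho>A \<circ> \<rho>B) k < 6" using A B by (simp add: monomial_def)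
qed

lemma monomial_matid: "monomial matid id (\<lambda>_. 1)"
  by (simp add: monomial_def matid_def)

lemma monomial_matpow: "monomial M \<rho> e \<Longrightarrow> \<exists>\<rho>' e'. monomial (matpow M n) \<rho>' e'"
proof (induction n)
  case 0
  then show ?case using monomial_matid by auto
next
  case (Suc n)
  then obtain \<rho>' e' where "monomial (matpow M n) \<rho>' e'" by blast
  then have "monomial (matmul (matpow M n) M) (\<rho>' \<circ> \<rho>) (\<lambda>k. e' (\<rho> k) * e k)"
    using Suc.prems by (rule monomial_matmul)
  then show ?case by auto
qed

lemma tensor_act_matmul:
  assumes A: "monomial A \<rho>A eA" and B: "monomial B \<rho>B eB"
  shows "tensor_act (matmul A B) w = tensor_act B (tensor_act A w)"
proof -
  have image: "map \<rho>B ls \<in> idx 6" if "ls \<in> idx 6" for ls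
    using B that by (auto simp: idx_def monomial_def)
  show ?thesis
    unfolding tensor_act_monomial[OF monomial_matmul[OF A B]] tensor_act_monomial[OF A]
      tensor_act_monomial[OF B]
    by (rule ext) (auto simp: image prod_list_map_mult comp_def ac_simps)
qed

lemma tensor_act_scale: "tensor_act M (\<lambda>ks. d * w ks) = (\<lambda>ls. d * tensor_act M w ls)"
  unfolding tensor_act_def by (rule ext) (simp add: sum_distrib_left ac_simps)

lemma gact_scale: "gact h (\<lambda>ks. c * w ks) = (\<lambda>ks. c * gact h w ks)"
  unfolding gact_eq_tensor_act tensor_act_scale ..

lemma dact_scale: "dact x (\<lambda>ks. c * w ks) = (\<lambda>ks. c * dact x w ks)"
proof -
  have "proj g (\<lambda>ks. c * w ks) = (\<lambda>ks. c * proj g w ks)" for g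
    by (auto simp: proj_def)
  then show ?thesis
    unfolding dact_def by (simp add: gact_scale sum_distrib_left ac_simps)
qed

lemma tensor_act_matid: "(\<And>ks. ks \<notin> idx 6 \<Longrightarrow> w ks = 0) \<Longrightarrow> tensor_act matid w = w"
  unfolding tensor_act_monomial[OF monomial_matid] by (rule ext) (auto simp: map_replicate_const)

lemma tensor_act_matpow_eigen:
  assumes mono: "monomial M \<rho> e" and supp: "\<And>ks. ks \<notin> idx 6 \<Longrightarrow> w ks = 0"
    and eigen: "tensor_act M w = (\<lambda>ks. c * w ks)"
  shows "tensor_act (matpow M n) w = (\<lambda>ks. c ^ n * w ks)"
proof (induction n)
  case 0
  then show ?case using tensor_act_matid[OF supp] by simp
next
  case (Suc n)
  obtain \<rho>' e' where "monomial (matpow M n) \<rho>' e'" using monomial_matpow[OF mono] by blast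
  then have "tensor_act (matpow M (Suc n)) w = tensor_act M (tensor_act (matpow M n) w)"
    using tensor_act_matmul[OF _ mono] by simp
  also have "\<dots> = (\<lambda>ks. c ^ Suc n * w ks)"
    unfolding Suc tensor_act_scale eigen by (simp add: ac_simps)
  finally show ?case .
qed

definition \<rho>r :: "nat \<Rightarrow> nat" where "\<rho>r k = [1, 0, 3, 2, 5, 4] ! k"
definition er :: "nat \<Rightarrow> complex" where "er k = [-1, 1, -1, -1, -\<i>, -\<i>] ! k"
definition \<rho>s :: "nat \<Rightarrow> nat" where "\<rho>s k = [0, 1, 3, 2, 5, 4] ! k"
definition es :: "nat \<Rightarrow> complex" where "es k = [-\<i>, \<i>, 1, 1, -1, 1] ! k"

lemma monomial_Mr: "monomial Mr \<rho>r er"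
  unfolding monomial_def
proof (intro conjI allI impI)
  fix j k :: nat assume "j < 6" "k < 6"
  then show "Mr j k = (if j = \<rho>r k then er k else 0)"
    using less_six_cases[OF \<open>j < 6\<close>] less_six_cases[OF \<open>k < 6\<close>]
    by (elim disjE; simp add: Mr_def \<rho>r_def er_def)
next
  fix k :: nat assume "k < 6"
  then show "\<rho>r k < 6" using less_six_cases[OF \<open>k < 6\<close>] by (elim disjE; simp add: \<rho>r_def)
qed

lemma monomial_Ms: "monomial Ms \<rho>s es"
  unfolding monomial_def
proof (intro conjI allI impI)
  fix j k :: nat assume "j < 6" "k < 6"
  then show "Ms j k = (if j = \<rho>s k then es k else 0)"
    using less_six_cases[OF \<open>j < 6\<close>] less_six_cases[OF \<open>k < 6\<close>]
    by (elim disjE; simp add: Ms_def \<rho>s_def es_def)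
next
  fix k :: nat assume "k < 6"
  then show "\<rho>s k < 6" using less_six_cases[OF \<open>k < 6\<close>] by (elim disjE; simp add: \<rho>s_def)
qed

section \<open>The grading\<close>

lemma gen_grade_eqs:
  "gen_grade 0 = (0, 1)" "gen_grade 1 = (2, 1)" "gen_grade 2 = (3, 1)" "gen_grade 3 = (1, 1)"
  "gen_grade 4 = (3, 1)" "gen_grade 5 = (1, 1)" "gen_grade (Suc 0) = (2, 1)"
  by (simp_all add: gen_grade_def gmul_def gs_def gr_def)

lemma gmul_in_G: "gmul x y \<in> G"
  by (auto simp: gmul_def G_def split: prod.splits)

lemma word_grade_in_G: "word_grade p \<in> G"
proof -
  have "foldl (\<lambda>g j. gmul g (gen_grade j)) x p \<in> G" if "x \<in> G" for x
    using that by (induction p arbitrary: x) (auto simp: gmul_in_G)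
  then show ?thesis unfolding word_grade_def by (simp add: ge_def G_def)
qed

lemma G_cases: "x \<in> G \<Longrightarrow> x \<in> {(0,0), (1,0), (2,0), (3,0), (0,1), (1,1), (2,1), (3,1)}"
proof -
  assume "x \<in> G"
  then obtain a b where x: "x = (a, b)" "0 \<le> a" "a \<le> 3" "0 \<le> b" "b \<le> 1" by (auto simp: G_def)
  then have "a = 0 \<or> a = 1 \<or> a = 2 \<or> a = 3" "b = 0 \<or> b = 1" by auto
  then show ?thesis using x by auto
qed

lemma gen_grade_rel_pairs:
  assumes "x \<in> G"
  shows "gmul (gmul x (gen_grade 1)) (gen_grade 0) = gmul (gmul x (gen_grade 0)) (gen_grade 1)"
    "gmul (gmul x (gen_grade 3)) (gen_grade 2) = gmul (gmul x (gen_grade 2)) (gen_grade 3)"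
    "gmul (gmul x (gen_grade 5)) (gen_grade 4) = gmul (gmul x (gen_grade 4)) (gen_grade 5)"
    "gmul (gmul x (gen_grade 2)) (gen_grade 1) = gmul (gmul x (gen_grade 0)) (gen_grade 2)"
    "gmul (gmul x (gen_grade 2)) (gen_grade 0) = gmul (gmul x (gen_grade 1)) (gen_grade 2)"
    "gmul (gmul x (gen_grade 3)) (gen_grade 1) = gmul (gmul x (gen_grade 0)) (gen_grade 3)"
    "gmul (gmul x (gen_grade 3)) (gen_grade 0) = gmul (gmul x (gen_grade 1)) (gen_grade 3)"
    "gmul (gmul x (gen_grade 4)) (gen_grade 1) = gmul (gmul x (gen_grade 0)) (gen_grade 4)"
    "gmul (gmul x (gen_grade 4)) (gen_grade 0) = gmul (gmul x (gen_grade 1)) (gen_grade 4)"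
    "gmul (gmul x (gen_grade 5)) (gen_grade 1) = gmul (gmul x (gen_grade 0)) (gen_grade 5)"
    "gmul (gmul x (gen_grade 5)) (gen_grade 0) = gmul (gmul x (gen_grade 1)) (gen_grade 5)"
    "gmul (gmul x (gen_grade 5)) (gen_grade 2) = gmul (gmul x (gen_grade 2)) (gen_grade 5)"
    "gmul (gmul x (gen_grade 4)) (gen_grade 3) = gmul (gmul x (gen_grade 3)) (gen_grade 4)"
    "gmul (gmul x (gen_grade 4)) (gen_grade 2) = gmul (gmul x (gen_grade 2)) (gen_grade 4)"
    "gmul (gmul x (gen_grade 5)) (gen_grade 3) = gmul (gmul x (gen_grade 3)) (gen_grade 5)"
  using G_cases[OF assms] by (auto simp: gen_grade_eqs gmul_def)

lemma word_grade_append_pair: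
  "word_grade (p @ a # b # q) =
    foldl (\<lambda>g j. gmul g (gen_grade j)) (gmul (gmul (word_grade p) (gen_grade a)) (gen_grade b)) q"
  unfolding word_grade_def by simp

lemma finite_G: "finite G"
  by (simp add: G_def)

lemma ge_in_G: "ge \<in> G"
  by (simp add: G_def ge_def)

lemma sum_G_delta:
  fixes f :: "grp \<Rightarrow> complex"
  assumes "a \<in> G"
  shows "(\<Sum>h\<in>G. (if h = a then 1 else 0) * f h) = f a"
proof -
  have "(\<Sum>h\<in>G. (if h = a then 1 else 0) * f h) = (\<Sum>h\<in>G. if h = a then f h else 0)"
    by (intro sum.cong) auto
  then show ?thesis using assms finite_G by (simp add: sum.delta)
qed

section \<open>The space of superpotentials\<close>

locale D4_relations =
  fixes \<alpha> \<beta> \<gamma> u1 u2 u3 u4 :: complex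
begin

abbreviation W :: "(nat list \<Rightarrow> complex) set" where
  "W \<equiv> Wsp (rels \<alpha> \<beta> \<gamma> u1 u2 u3 u4)"

definition rel_eqns :: "(nat list \<Rightarrow> complex) \<Rightarrow> bool" where
  "rel_eqns f \<longleftrightarrow> (\<forall>a<6. f [a, a] = 0) \<and>
     f [1,0] = - \<alpha> * f [0,1] \<and> f [3,2] = - \<beta> * f [2,3] \<and> f [5,4] = - \<gamma> * f [4,5] \<and>
     f [2,1] = - u1 * f [0,2] \<and> f [2,0] = - u1 * f [1,2] \<and>
     f [3,1] = u1 * f [0,3] \<and> f [3,0] = u1 * f [1,3] \<and>
     f [4,1] = - \<i> * u2 * f [0,4] \<and> f [4,0] = - \<i> * u2 * f [1,4] \<and>
     f [5,1] = \<i> * u2 * f [0,5] \<and> f [5,0] = \<i> * u2 * f [1,5] \<and>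
     f [5,2] = - u3 * f [2,5] \<and> f [4,3] = - u3 * f [3,4] \<and>
     f [4,2] = - u4 * f [2,4] \<and> f [5,3] = - u4 * f [3,5]"

text \<open>Each unordered pair of distinct letters occurs in exactly one relation and no relation
  involves a square, so the relations are linearly independent and membership in their span is
  a list of proportionalities.\<close>

lemma in_R_iff_rel_eqns: "in_R (rels \<alpha> \<beta> \<gamma> u1 u2 u3 u4) f \<longleftrightarrow> rel_eqns f"
proof
  assume "in_R (rels \<alpha> \<beta> \<gamma> u1 u2 u3 u4) f"
  then obtain c where c: "\<And>ks. ks \<in> idx 2 \<Longrightarrow>
      f ks = (\<Sum>j<length (rels \<alpha> \<beta> \<gamma> u1 u2 u3 u4). c j * (rels \<alpha> \<beta> \<gamma> u1 u2 u3 u4 ! j) ks)"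
    unfolding in_R_def by blast
  have f: "f [a, b] =
      (\<Sum>j<length (rels \<alpha> \<beta> \<gamma> u1 u2 u3 u4). c j * (rels \<alpha> \<beta> \<gamma> u1 u2 u3 u4 ! j) [a, b])"
    if "a < 6" "b < 6" for a b
    using that by (intro c) (auto simp: idx_def)
  have "f [a, a] = 0" if "a < 6" for a
    using f[of a a] less_six_cases[of a] that
    by (auto simp: rels_def bin_def mono2_def lessThan_nat_numeral)
  then show "rel_eqns f"
    unfolding rel_eqns_def
    by (simp add: f rels_def bin_def mono2_def lessThan_nat_numeral algebra_simps)
next
  assume R: "rel_eqns f"
  define coeffs where "coeffs = [f [0,1], f [2,3], f [4,5], f [0,2], f [1,2], f [0,3], f [1,3],
     f [0,4], f [1,4], f [0,5] / \<i>, f [1,5] / \<i>, f [2,5], f [3,4], f [2,4], f [3,5]]"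
  show "in_R (rels \<alpha> \<beta> \<gamma> u1 u2 u3 u4) f"
    unfolding in_R_def
  proof (intro exI[of _ "\<lambda>j. coeffs ! j"] ballI)
    fix ks assume "ks \<in> idx 2"
    then obtain a b where ks: "ks = [a, b]" "a < 6" "b < 6" using idx_2_cases by blast
    show "f ks = (\<Sum>j<length (rels \<alpha> \<beta> \<gamma> u1 u2 u3 u4). coeffs ! j * (rels \<alpha> \<beta> \<gamma> u1 u2 u3 u4 ! j) ks)"
      using R less_six_cases[OF ks(2)] less_six_cases[OF ks(3)] unfolding ks(1) rel_eqns_def
      by (elim conjE disjE)
        (simp_all add: rels_def bin_def mono2_def lessThan_nat_numeral coeffs_def algebra_simps)
  qed
qed

lemma mem_W_iff: "w \<in> W \<longleftrightarrow> (\<forall>ks. ks \<notin> idx 6 \<longrightarrow> w ks = 0) \<and>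
   (\<forall>p q. length p + length q = 4 \<longrightarrow> set p \<subseteq> {..<6} \<longrightarrow> set q \<subseteq> {..<6} \<longrightarrow>
      rel_eqns (\<lambda>m. w (p @ m @ q)))"
  unfolding mem_Wsp_iff in_R_iff_rel_eqns ..

text \<open>In untwisted letters, a relation reads w(.. b a ..) = twist a b * w(.. a b ..) for a < b.\<close>

definition twist :: "nat \<Rightarrow> nat \<Rightarrow> complex" where
  "twist a b = (if (a,b) = (0,1) then - \<alpha> else if (a,b) = (2,3) then - \<beta> else if (a,b) = (4,5) then - \<gamma>
     else if (a,b) = (0,2) \<or> (a,b) = (1,2) then - u1
     else if (a,b) = (0,3) \<or> (a,b) = (1,3) then u1
     else if (a,b) = (0,4) \<or> (a,b) = (1,4) then - \<i> * u2
     else if (a,b) = (0,5) \<or> (a,b) = (1,5) then \<i> * u2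
     else if (a,b) = (2,4) \<or> (a,b) = (3,5) then - u4
     else if (a,b) = (2,5) \<or> (a,b) = (3,4) then - u3 else 1)"

definition twist_past :: "nat \<Rightarrow> nat list \<Rightarrow> complex" where
  "twist_past x l = prod_list (map (\<lambda>y. if y < x then twist y x else 1) l)"

fun inversion_weight :: "nat list \<Rightarrow> complex" where
  "inversion_weight [] = 1"
| "inversion_weight (x # l) = twist_past x l * inversion_weight l"

lemma twist_past_swap: "twist_past x (p @ [a, b] @ q) = twist_past x (p @ [b, a] @ q)"
  unfolding twist_past_def by (simp add: ac_simps)

lemma inversion_weight_swap:
  "a < b \<Longrightarrow> inversion_weight (p @ [b, a] @ q) = twist a b * inversion_weight (p @ [a, b] @ q)"
proof (induction p)
  case Nil
  then show ?case by (simp add: twist_past_def)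
next
  case (Cons x p)
  then show ?case using twist_past_swap[of x p a b q] by (simp add: ac_simps)
qed

definition superpot :: "nat list \<Rightarrow> complex" where
  "superpot ks =
    (if ks \<in> idx 6 \<and> distinct (untwist False ks) then inversion_weight (untwist False ks) else 0)"

lemma superpot_sorted: "superpot [0, 1, 2, 3, 4, 5] = 1"
  by (simp add: superpot_def idx_def twist_past_def)

lemma superpot_swap:
  assumes "a < 6" "b < 6" "c < 6" "d < 6"
    and "untwist (parity False p) [a, b] = [x, y]" "untwist (parity False p) [c, d] = [y, x]"
    and "parity (parity False p) [a, b] = parity (parity False p) [c, d]" and "x < y"
  shows "superpot (p @ [c, d] @ q) = twist x y * superpot (p @ [a, b] @ q)"
proof -
  define rest where "rest = untwist (parity (parity False p) [a, b]) q"
  have ab: "untwist False (p @ [a, b] @ q) = untwist False p @ [x, y] @ rest"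
    unfolding rest_def untwist_append assms(5) by simp
  have cd: "untwist False (p @ [c, d] @ q) = untwist False p @ [y, x] @ rest"
    unfolding rest_def assms(7) untwist_append assms(6) by simp
  have "p @ [c, d] @ q \<in> idx 6 \<longleftrightarrow> p @ [a, b] @ q \<in> idx 6"
    using assms(1-4) by (auto simp: idx_def)
  moreover have "distinct (untwist False p @ [y, x] @ rest) \<longleftrightarrow> distinct (untwist False p @ [x, y] @ rest)"
    by auto
  ultimately show ?thesis
    unfolding superpot_def ab cd using inversion_weight_swap[OF assms(8)] by simp
qed

lemma superpot_square: "superpot (p @ a # a # q) = 0"
proof -
  have "\<not> distinct (untwist False (p @ [a, a] @ q))"
    by (simp add: untwist_append)
  then show ?thesis by (simp add: superpot_def del: untwist.simps)
qed

definition rel_coeff :: "nat \<Rightarrow> nat \<Rightarrow> complex" where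
  "rel_coeff a b = [1, (- \<alpha>), (- u1), (u1), (- \<i> * u2), (\<i> * u2), (1 / (- \<alpha>)), 1, (- u1), (u1),
    (- \<i> * u2), (\<i> * u2), (1 / (- u1)), (1 / (- u1)), 1, (- \<beta>), (- u4), (- u3), (1 / (u1)),
    (1 / (u1)), (1 / (- \<beta>)), 1, (- u3), (- u4), (1 / (- \<i> * u2)), (1 / (- \<i> * u2)), (1 / (- u4)),
    (1 / (- u3)), 1, (- \<gamma>), (1 / (\<i> * u2)), (1 / (\<i> * u2)), (1 / (- u3)), (1 / (- u4)),
    (1 / (- \<gamma>)), 1] ! (6 * a + b)"

lemma rel_eqns_cong:
  "rel_eqns g \<Longrightarrow> (\<And>a b. a < 6 \<Longrightarrow> b < 6 \<Longrightarrow> g' [a, b] = g [a, b]) \<Longrightarrow> rel_eqns g'"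
  unfolding rel_eqns_def by simp

lemma rel_eqns_scale: "rel_eqns g \<Longrightarrow> rel_eqns (\<lambda>m. c * g m)"
  unfolding rel_eqns_def by simp

lemma W_rel_eqns:
  assumes "v \<in> W" "length p + length q = 4" "set p \<subseteq> {..<6}" "set q \<subseteq> {..<6}"
  shows "rel_eqns (\<lambda>m. v (p @ m @ q))"
  using assms unfolding mem_W_iff by blast

lemma W_tensor_act:
  assumes mono: "monomial M \<rho> e"
    and preserves: "\<And>g. rel_eqns g \<Longrightarrow> rel_eqns (\<lambda>m. g (map \<rho> m) * prod_list (map e m))"
    and w: "w \<in> W"
  shows "tensor_act M w \<in> W"
  unfolding mem_W_iff
proof (intro conjI allI impI)
  fix ks assume "ks \<notin> idx 6"
  then show "tensor_act M w ks = 0" by (simp add: tensor_act_def)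
next
  fix p q :: "nat list"
  assume len: "length p + length q = 4" and p: "set p \<subseteq> {..<6}" and q: "set q \<subseteq> {..<6}"
  have "set (map \<rho> p) \<subseteq> {..<6}" "set (map \<rho> q) \<subseteq> {..<6}"
    using p q mono by (auto simp: monomial_def)
  then have "rel_eqns (\<lambda>m. w (map \<rho> p @ m @ map \<rho> q))"
    using w len unfolding mem_W_iff by auto
  from rel_eqns_scale[OF preserves[OF this], of "prod_list (map e p) * prod_list (map e q)"]
  show "rel_eqns (\<lambda>m. tensor_act M w (p @ m @ q))"
  proof (rule rel_eqns_cong)
    fix a b :: nat assume "a < 6" "b < 6"
    then have "p @ [a, b] @ q \<in> idx 6" using len p q by (auto simp: idx_def)
    then show "tensor_act M w (p @ [a, b] @ q) = prod_list (map e p) * prod_list (map e q) *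
        (w (map \<rho> p @ map \<rho> [a, b] @ map \<rho> q) * prod_list (map e [a, b]))"
      unfolding tensor_act_monomial[OF mono] by (simp add: ac_simps)
  qed
qed

lemma W_proj:
  assumes w: "w \<in> W"
  shows "proj g w \<in> W"
  unfolding mem_W_iff
proof (intro conjI allI impI)
  fix ks assume "ks \<notin> idx 6"
  then show "proj g w ks = 0" using w by (simp add: proj_def mem_W_iff)
next
  fix p q :: "nat list"
  assume "length p + length q = 4" "set p \<subseteq> {..<6}" "set q \<subseteq> {..<6}"
  then have "rel_eqns (\<lambda>m. w (p @ m @ q))"
    using w unfolding mem_W_iff by auto
  then show "rel_eqns (\<lambda>m. proj g w (p @ m @ q))"
    unfolding rel_eqns_def proj_def
    by (simp add: word_grade_append_pair gen_grade_rel_pairs[OF word_grade_in_G] del: One_nat_def)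
qed

lemma superpot_eq_0: "ks \<notin> idx 6 \<Longrightarrow> superpot ks = 0"
  by (simp add: superpot_def)

end

locale D4_algebra = D4_relations +
  assumes alpha: "\<alpha> \<in> {1, -1}" and beta: "\<beta> \<in> {1, -1}" and gamma: "\<gamma> \<in> {1, -1}"
    and u1: "u1 \<noteq> 0" and u2: "u2 \<noteq> 0" and u3: "u3 \<noteq> 0" and u4: "u4 \<noteq> 0"
begin

lemma nonzero_params: "\<alpha> \<noteq> 0" "\<beta> \<noteq> 0" "\<gamma> \<noteq> 0" "u1 \<noteq> 0" "u2 \<noteq> 0" "u3 \<noteq> 0" "u4 \<noteq> 0"
  using alpha beta gamma u1 u2 u3 u4 by auto

text \<open>For untwisted letters the relation x_1 x_2 = \<alpha> x_2 x_1 is read in both directions, depending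
  on the parity; the two readings agree because \<alpha> * \<alpha> = 1.\<close>

lemma superpot_rel_eqns: "rel_eqns (\<lambda>m. superpot (p @ m @ q))"
proof (cases "parity False p")
  case True
  show ?thesis unfolding rel_eqns_def
    apply (intro conjI)
     apply (simp add: superpot_square)
    using True alpha
      superpot_swap[of 1 0 0 1 p 0 1 q] superpot_swap[of 2 3 3 2 p 2 3 q] superpot_swap[of 4 5 5 4 p 4 5 q]
      superpot_swap[of 0 2 2 1 p 1 2 q] superpot_swap[of 1 2 2 0 p 0 2 q] superpot_swap[of 0 3 3 1 p 1 3 q]
      superpot_swap[of 1 3 3 0 p 0 3 q] superpot_swap[of 0 4 4 1 p 1 4 q] superpot_swap[of 1 4 4 0 p 0 4 q]
      superpot_swap[of 0 5 5 1 p 1 5 q] superpot_swap[of 1 5 5 0 p 0 5 q] superpot_swap[of 2 5 5 2 p 2 5 q]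
      superpot_swap[of 3 4 4 3 p 3 4 q] superpot_swap[of 2 4 4 2 p 2 4 q] superpot_swap[of 3 5 5 3 p 3 5 q]
    by (auto simp: twist_def)
next
  case False
  show ?thesis unfolding rel_eqns_def
    apply (intro conjI)
     apply (simp add: superpot_square)
    using False
      superpot_swap[of 0 1 1 0 p 0 1 q] superpot_swap[of 2 3 3 2 p 2 3 q] superpot_swap[of 4 5 5 4 p 4 5 q]
      superpot_swap[of 0 2 2 1 p 0 2 q] superpot_swap[of 1 2 2 0 p 1 2 q] superpot_swap[of 0 3 3 1 p 0 3 q]
      superpot_swap[of 1 3 3 0 p 1 3 q] superpot_swap[of 0 4 4 1 p 0 4 q] superpot_swap[of 1 4 4 0 p 1 4 q]
      superpot_swap[of 0 5 5 1 p 0 5 q] superpot_swap[of 1 5 5 0 p 1 5 q] superpot_swap[of 2 5 5 2 p 2 5 q]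
      superpot_swap[of 3 4 4 3 p 3 4 q] superpot_swap[of 2 4 4 2 p 2 4 q] superpot_swap[of 3 5 5 3 p 3 5 q]
    by (auto simp: twist_def)
qed

lemma superpot_in_W: "superpot \<in> W"
  unfolding mem_W_iff using superpot_rel_eqns by (auto simp: superpot_def)

lemma rel_coeff_nonzero:
  assumes "a < 6" "b < 6"
  shows "rel_coeff a b \<noteq> 0"
  using less_six_cases[OF assms(1)] less_six_cases[OF assms(2)] nonzero_params
  by (elim disjE; simp add: rel_coeff_def)

lemma rel_eqns_rel_partner:
  assumes "a < 6" "b < 6" "a \<noteq> b" "rel_eqns g"
  shows "g (rel_partner a b) = rel_coeff a b * g [a, b]"
  using less_six_cases[OF assms(1)] less_six_cases[OF assms(2)] assms(3,4) nonzero_params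
  unfolding rel_eqns_def
  by (elim disjE; simp add: rel_partner_def rel_coeff_def field_simps)

lemma W_descent_step:
  assumes ks: "ks \<in> idx 6" and t: "t < 5"
    and inv: "untwist False ks ! Suc t \<le> untwist False ks ! t"
  obtains "\<forall>v\<in>W. v ks = 0"
  | ks' c where "ks' \<in> idx 6" "base6 (untwist False ks') < base6 (untwist False ks)" "c \<noteq> 0"
      "\<forall>v\<in>W. v ks' = c * v ks"
proof -
  define p where "p = take t ks"
  define a where "a = ks ! t"
  define b where "b = ks ! Suc t"
  define q where "q = drop (Suc (Suc t)) ks"
  have len: "length ks = 6" and set: "set ks \<subseteq> {..<6}" using ks by (auto simp: idx_def)
  have split: "ks = p @ [a, b] @ q"
    unfolding p_def a_def b_def q_def using t len by (simp add: Cons_nth_drop_Suc)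
  have lp: "length p = t" and lpq: "length p + length q = 4"
    using t len by (simp_all add: p_def q_def)
  have ab: "a < 6" "b < 6" and pq: "set p \<subseteq> {..<6}" "set q \<subseteq> {..<6}"
    using set unfolding split by auto
  show thesis
  proof (cases "a = b")
    case True
    then have "\<forall>v\<in>W. v ks = 0"
      using W_rel_eqns[OF _ lpq pq] ab unfolding split rel_eqns_def by auto
    then show thesis by (rule that(1))
  next
    case False
    define P where "P = parity False p"
    define rest where "rest = untwist (parity P [a, b]) q"
    define ks' where "ks' = p @ rel_partner a b @ q"
    note partner = rel_partner_props[OF ab False]
    obtain x y where xy: "untwist P [a, b] = [x, y]"
      using length_untwist[of P "[a, b]"]
      by (auto simp del: untwist.simps length_untwist simp: length_Suc_conv)
    have n: "untwist False ks = untwist False p @ [x, y] @ rest"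
      unfolding split untwist_append rest_def P_def[symmetric] xy ..
    have n': "untwist False ks' = untwist False p @ [y, x] @ rest"
      unfolding ks'_def untwist_append rest_def partner(3,4) xy P_def[symmetric] by simp
    have "y < x"
      using inv distinct_untwist_pair[OF False, of P] lp unfolding n xy by (auto simp: nth_append)
    then have "base6 (untwist False ks') < base6 (untwist False ks)"
      unfolding n n' by (rule base6_swap_less)
    moreover have "ks' \<in> idx 6"
      using partner(1,2) lpq pq by (auto simp: ks'_def idx_def)
    moreover have "\<forall>v\<in>W. v ks' = rel_coeff a b * v ks"
      using rel_eqns_rel_partner[OF ab False W_rel_eqns[OF _ lpq pq]] by (simp add: ks'_def split)
    ultimately show thesis
      using that(2) rel_coeff_nonzero[OF ab] by blast
  qed
qed

lemma W_proportional:
  assumes v: "v \<in> W" and v': "v' \<in> W" and ks: "ks \<in> idx 6"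
  shows "v ks * v' [0, 1, 2, 3, 4, 5] = v' ks * v [0, 1, 2, 3, 4, 5]"
  using ks
proof (induction "base6 (untwist False ks)" arbitrary: ks rule: less_induct)
  case less
  show ?case
  proof (cases "\<exists>t<5. untwist False ks ! Suc t \<le> untwist False ks ! t")
    case True
    then obtain t where "t < 5" "untwist False ks ! Suc t \<le> untwist False ks ! t" by blast
    with less.prems show ?thesis
    proof (cases rule: W_descent_step)
      case 1
      then have "v ks = 0" "v' ks = 0" using v v' by blast+
      then show ?thesis by simp
    next
      case (2 ks' c)
      then have "v ks' * v' [0, 1, 2, 3, 4, 5] = v' ks' * v [0, 1, 2, 3, 4, 5]"
        using less.hyps by blast
      moreover have "v ks' = c * v ks" "v' ks' = c * v' ks"
        using 2 v v' by blast+
      ultimately show ?thesis using \<open>c \<noteq> 0\<close> by (simp add: mult.assoc)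
    qed
  next
    case False
    then have increasing: "\<forall>t<5. untwist False ks ! t < untwist False ks ! Suc t"
      by (simp add: not_le)
    have "length (untwist False ks) = 6"
      using less.prems by (simp add: idx_def)
    moreover have "set (untwist False ks) \<subseteq> {..<6}"
      using less.prems by (intro set_untwist_subset) (simp add: idx_def)
    ultimately have "untwist False ks = [0, 1, 2, 3, 4, 5]"
      using increasing by (rule strictly_increasing_digits)
    then have "ks = [0, 1, 2, 3, 4, 5]"
      using untwist_inj[of False ks "[0, 1, 2, 3, 4, 5]"] by simp
    then show ?thesis by (simp add: mult.commute)
  qed
qed

lemma W_eq_multiple_superpot:
  assumes "v \<in> W"
  shows "v = (\<lambda>ks. v [0, 1, 2, 3, 4, 5] * superpot ks)"
proof
  fix ks
  show "v ks = v [0, 1, 2, 3, 4, 5] * superpot ks"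
  proof (cases "ks \<in> idx 6")
    case True
    then show ?thesis
      using W_proportional[OF assms superpot_in_W True] superpot_sorted by (simp add: ac_simps)
  next
    case False
    then show ?thesis using assms by (simp add: mem_W_iff superpot_def)
  qed
qed

lemma rel_eqns_Mr:
  assumes "rel_eqns g"
  shows "rel_eqns (\<lambda>m. g (map \<rho>r m) * prod_list (map er m))"
proof -
  have "\<forall>a<6. g [\<rho>r a, \<rho>r a] = 0"
    using assms monomial_Mr unfolding rel_eqns_def monomial_def by auto
  then show ?thesis
    unfolding rel_eqns_def
    apply (intro conjI)
     apply simp
    using assms alpha beta gamma unfolding rel_eqns_def by (auto simp: \<rho>r_def er_def)
qed

lemma rel_eqns_Ms:
  assumes "rel_eqns g"
  shows "rel_eqns (\<lambda>m. g (map \<rho>s m) * prod_list (map es m))"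
proof -
  have "\<forall>a<6. g [\<rho>s a, \<rho>s a] = 0"
    using assms monomial_Ms unfolding rel_eqns_def monomial_def by auto
  then show ?thesis
    unfolding rel_eqns_def
    apply (intro conjI)
     apply simp
    using assms alpha beta gamma unfolding rel_eqns_def by (auto simp: \<rho>s_def es_def)
qed

end

section \<open>The homological determinant\<close>

context D4_algebra
begin

lemma tensor_act_superpot:
  assumes "monomial M \<rho> e"
    and "\<And>g. rel_eqns g \<Longrightarrow> rel_eqns (\<lambda>m. g (map \<rho> m) * prod_list (map e m))"
  shows "tensor_act M superpot =
    (\<lambda>ks. superpot (map \<rho> [0, 1, 2, 3, 4, 5]) * prod_list (map e [0, 1, 2, 3, 4, 5]) * superpot ks)"
proof -
  have "tensor_act M superpot \<in> W"
    using assms superpot_in_W by (rule W_tensor_act)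
  then have "tensor_act M superpot = (\<lambda>ks. tensor_act M superpot [0, 1, 2, 3, 4, 5] * superpot ks)"
    by (rule W_eq_multiple_superpot)
  then show ?thesis
    unfolding tensor_act_monomial[OF assms(1)] by (simp add: idx_def)
qed

lemma tensor_act_Mr_superpot: "tensor_act Mr superpot = (\<lambda>ks. (- \<alpha> * \<beta> * \<gamma>) * superpot ks)"
  using tensor_act_superpot[OF monomial_Mr rel_eqns_Mr]
  by (simp add: \<rho>r_def er_def superpot_def idx_def twist_def twist_past_def mult.assoc)

lemma tensor_act_Ms_superpot: "tensor_act Ms superpot = (\<lambda>ks. (- \<beta> * \<gamma>) * superpot ks)"
  using tensor_act_superpot[OF monomial_Ms rel_eqns_Ms]
  by (simp add: \<rho>s_def es_def superpot_def idx_def twist_def twist_past_def mult.assoc)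

definition hdet_char :: "grp \<Rightarrow> complex" where
  "hdet_char h = (- \<alpha> * \<beta> * \<gamma>) ^ nat (fst h) * (- \<beta> * \<gamma>) ^ nat (snd h)"

lemma gact_superpot: "gact h superpot = (\<lambda>ks. hdet_char h * superpot ks)"
proof -
  obtain \<rho> e where r: "monomial (matpow Mr (nat (fst h))) \<rho> e"
    using monomial_matpow[OF monomial_Mr] by blast
  obtain \<rho>' e' where s: "monomial (matpow Ms (nat (snd h))) \<rho>' e'"
    using monomial_matpow[OF monomial_Ms] by blast
  have "gact h superpot = tensor_act (matpow Ms (nat (snd h))) (tensor_act (matpow Mr (nat (fst h))) superpot)"
    unfolding gact_eq_tensor_act gmat_def using tensor_act_matmul[OF r s] by simp
  also have "\<dots> = tensor_act (matpow Ms (nat (snd h)))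
      (\<lambda>ks. (- \<alpha> * \<beta> * \<gamma>) ^ nat (fst h) * superpot ks)"
    using tensor_act_matpow_eigen[OF monomial_Mr superpot_eq_0 tensor_act_Mr_superpot] by simp
  also have "\<dots> = (\<lambda>ks. (- \<alpha> * \<beta> * \<gamma>) ^ nat (fst h) * tensor_act (matpow Ms (nat (snd h))) superpot ks)"
    by (rule tensor_act_scale)
  also have "\<dots> = (\<lambda>ks. hdet_char h * superpot ks)"
    using tensor_act_matpow_eigen[OF monomial_Ms superpot_eq_0 tensor_act_Ms_superpot]
    by (simp add: hdet_char_def ac_simps)
  finally show ?thesis .
qed

lemma proj_superpot: "proj g superpot = (\<lambda>ks. (if g = ge then 1 else 0) * superpot ks)"
proof -
  have "proj g superpot = (\<lambda>ks. proj g superpot [0, 1, 2, 3, 4, 5] * superpot ks)"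
    using W_proj[OF superpot_in_W] by (rule W_eq_multiple_superpot)
  moreover have "word_grade [0, 1, 2, 3, 4, 5] = ge"
    by (simp add: word_grade_def gen_grade_eqs gmul_def ge_def)
  then have "proj g superpot [0, 1, 2, 3, 4, 5] = (if g = ge then 1 else 0)"
    using superpot_sorted by (simp add: proj_def)
  ultimately show ?thesis by simp
qed

lemma dact_superpot: "dact x superpot = (\<lambda>ks. (\<Sum>h\<in>G. x ge h * hdet_char h) * superpot ks)"
proof
  fix ks
  have "dact x superpot ks = (\<Sum>g\<in>G. if g = ge then (\<Sum>h\<in>G. x g h * (hdet_char h * superpot ks)) else 0)"
    unfolding dact_def proj_superpot gact_scale gact_superpot by (intro sum.cong) auto
  also have "\<dots> = (\<Sum>h\<in>G. x ge h * (hdet_char h * superpot ks))"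
    using finite_G ge_in_G by (simp add: sum.delta)
  also have "\<dots> = (\<Sum>h\<in>G. x ge h * hdet_char h) * superpot ks"
    by (simp add: sum_distrib_right mult.assoc)
  finally show "dact x superpot ks = (\<Sum>h\<in>G. x ge h * hdet_char h) * superpot ks" .
qed

lemma hdet_eq_sum: "hdet (rels \<alpha> \<beta> \<gamma> u1 u2 u3 u4) x = (\<Sum>h\<in>G. x ge h * hdet_char h)"
  unfolding hdet_def
proof (rule the_equality)
  show "\<forall>w\<in>W. dact x w = (\<lambda>ks. (\<Sum>h\<in>G. x ge h * hdet_char h) * w ks)"
  proof
    fix w assume "w \<in> W"
    define c where "c = w [0, 1, 2, 3, 4, 5]"
    have w: "w = (\<lambda>ks. c * superpot ks)"
      unfolding c_def using \<open>w \<in> W\<close> by (rule W_eq_multiple_superpot)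
    show "dact x w = (\<lambda>ks. (\<Sum>h\<in>G. x ge h * hdet_char h) * w ks)"
      unfolding w dact_scale dact_superpot by (simp add: ac_simps)
  qed
next
  fix c assume "\<forall>w\<in>W. dact x w = (\<lambda>ks. c * w ks)"
  then have "dact x superpot [0, 1, 2, 3, 4, 5] = c"
    using superpot_in_W superpot_sorted by simp
  then show "c = (\<Sum>h\<in>G. x ge h * hdet_char h)"
    using superpot_sorted by (simp add: dact_superpot)
qed

lemma hdet_dphi: "hdet (rels \<alpha> \<beta> \<gamma> u1 u2 u3 u4) (dphi g) = (if g = ge then 1 else 0)"
proof -
  have "hdet (rels \<alpha> \<beta> \<gamma> u1 u2 u3 u4) (dphi g) =
      (\<Sum>h\<in>G. (if h = ge then 1 else 0) * ((if g = ge then 1 else 0) * hdet_char h))"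
    unfolding hdet_eq_sum dphi_def by (intro sum.cong) auto
  also have "\<dots> = (if g = ge then 1 else 0)"
    by (subst sum_G_delta) (simp_all add: G_def ge_def hdet_char_def)
  finally show ?thesis .
qed

lemma hdet_dgrp: "a \<in> G \<Longrightarrow> hdet (rels \<alpha> \<beta> \<gamma> u1 u2 u3 u4) (dgrp a) = hdet_char a"
  unfolding hdet_eq_sum dgrp_def using sum_G_delta[of a hdet_char] by simp

lemma hdet_eq_dcounit_iff:
  "(\<forall>x. hdet (rels \<alpha> \<beta> \<gamma> u1 u2 u3 u4) x = dcounit x) \<longleftrightarrow> \<alpha> = 1 \<and> \<beta> = - \<gamma>"
proof
  assume hdet: "\<forall>x. hdet (rels \<alpha> \<beta> \<gamma> u1 u2 u3 u4) x = dcounit x"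
  have "dcounit (dgrp a) = 1" if "a \<in> G" for a
    using that finite_G by (simp add: dcounit_def dgrp_def sum.delta)
  then have "hdet_char gr = 1" "hdet_char gs = 1"
    using hdet hdet_dgrp by (simp_all add: G_def gr_def gs_def)
  then show "\<alpha> = 1 \<and> \<beta> = - \<gamma>"
    using alpha beta gamma by (auto simp: hdet_char_def gr_def gs_def)
next
  assume "\<alpha> = 1 \<and> \<beta> = - \<gamma>"
  then have "hdet_char h = 1" for h
    unfolding hdet_char_def using gamma by auto
  then show "\<forall>x. hdet (rels \<alpha> \<beta> \<gamma> u1 u2 u3 u4) x = dcounit x"
    by (simp add: hdet_eq_sum dcounit_def)
qed

end

theorem mainTheorem8:
  fixes \<alpha> \<beta> \<gamma> u1 u2 u3 u4 :: complex
  assumes "\<alpha> \<in> {1, -1}" and "\<beta> \<in> {1, -1}" and "\<gamma> \<in> {1, -1}"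
    and "u1 \<noteq> 0" and "u2 \<noteq> 0" and "u3 \<noteq> 0" and "u4 \<noteq> 0"
  shows "(\<exists>w\<in>Wsp (rels \<alpha> \<beta> \<gamma> u1 u2 u3 u4). w \<noteq> (\<lambda>_. 0))
    \<and> (\<forall>g\<in>G. hdet (rels \<alpha> \<beta> \<gamma> u1 u2 u3 u4) (dphi g) = (if g = ge then 1 else 0))
    \<and> hdet (rels \<alpha> \<beta> \<gamma> u1 u2 u3 u4) (dgrp gr) = - \<alpha> * \<beta> * \<gamma>
    \<and> hdet (rels \<alpha> \<beta> \<gamma> u1 u2 u3 u4) (dgrp gs) = - \<beta> * \<gamma>
    \<and> ((\<forall>x. hdet (rels \<alpha> \<beta> \<gamma> u1 u2 u3 u4) x = dcounit x) \<longleftrightarrow> (\<alpha> = 1 \<and> \<beta> = - \<gamma>))"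
proof -
  interpret D4_algebra \<alpha> \<beta> \<gamma> u1 u2 u3 u4
    using assms by unfold_locales
  have "superpot \<noteq> (\<lambda>_. 0)"
    using superpot_sorted by (metis zero_neq_one)
  moreover have "hdet (rels \<alpha> \<beta> \<gamma> u1 u2 u3 u4) (dgrp gr) = - \<alpha> * \<beta> * \<gamma>"
    using hdet_dgrp[of gr] by (simp add: G_def gr_def hdet_char_def)
  moreover have "hdet (rels \<alpha> \<beta> \<gamma> u1 u2 u3 u4) (dgrp gs) = - \<beta> * \<gamma>"
    using hdet_dgrp[of gs] by (simp add: G_def gs_def hdet_char_def)
  ultimately show ?thesis
    using superpot_in_W hdet_dphi hdet_eq_dcounit_iff by blast
qed

end
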